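(* There are absolute constants $c,C>0$ such that for every integer $d\ge 2$ there exist a set $\mathcal P$ of $n$ points and a set $\mathcal H$ of $m$ hyperplanes in $\mathbb R^d$ (with $n,m\ge 1$) satisfying \[\operatorname{I}(\mathcal P,\mathcal H)\ \ge\ c\,\frac{nm}{\sqrt d}\qquad\text{and}\qquad \operatorname{rs}(\mathcal P,\mathcal H)\ \le\ C\,\frac{mn\,2^{-d}}{\sqrt d}.\]
   Context: A point $p$ and a hyperplane $h$ are incident if $p\in h$. For a finite point set $\mathcal P$ and finite hyperplane set $\mathcal H$ in $\mathbb R^d$, $\operatorname{I}(\mathcal P,\mathcal H)$ is the number of incident pairs $(p,h)\in\mathcal P\times\mathcal H$, and $\operatorname{rs}(\mathcal P,\mathcal H)=\max_{S}\,|\{p\in\mathcal P: p\in S\}|\cdot|\{h\in\mathcal H: S\subseteq h\}|$, the maximum over all affine subspaces $S\subseteq\mathbb R^d$. *)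

theory Defs
  imports Complex_Main
begin

text \<open>R^d is represented by functions nat => real vanishing outside {..<d}.\<close>

definition Rspace :: "nat \<Rightarrow> (nat \<Rightarrow> real) set" where
  "Rspace d = {x. \<forall>i\<ge>d. x i = 0}"

definition hyperplane :: "nat \<Rightarrow> (nat \<Rightarrow> real) set \<Rightarrow> bool" where
  "hyperplane d h \<longleftrightarrow> (\<exists>a b. (\<exists>i<d. a i \<noteq> 0) \<and>
      h = {x \<in> Rspace d. (\<Sum>i<d. a i * x i) = b})"

definition affine_subspace :: "nat \<Rightarrow> (nat \<Rightarrow> real) set \<Rightarrow> bool" where
  "affine_subspace d S \<longleftrightarrow> S \<noteq> {} \<and> S \<subseteq> Rspace d \<and>
      (\<forall>x\<in>S. \<forall>y\<in>S. \<forall>t::real. (\<lambda>i. (1 - t) * x i + t * y i) \<in> S)"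

definition incidences :: "(nat \<Rightarrow> real) set \<Rightarrow> (nat \<Rightarrow> real) set set \<Rightarrow> nat" where
  "incidences P H = card {(p, h). p \<in> P \<and> h \<in> H \<and> p \<in> h}"

definition rs :: "nat \<Rightarrow> (nat \<Rightarrow> real) set \<Rightarrow> (nat \<Rightarrow> real) set set \<Rightarrow> nat" where
  "rs d P H = Max {card {p \<in> P. p \<in> S} * card {h \<in> H. S \<subseteq> h} | S. affine_subspace d S}"

end

(*
  Points: the cube {0,1}^d. Hyperplanes: a . (x - 1/2) = s/2 for every nonzero a in {0,1}^d and
  every integer s with |s| <= 2 ceil(sqrt d), about 2^d sqrt d of them.

  Incidences: x lies on the hyperplane with normal a and s = 2 a . (x - 1/2), and s is in range
  unless |a . (x - 1/2)| > ceil(sqrt d). The second moment of a . (x - 1/2) over the cube is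
  |a|^2/4 <= d/4, so by Chebyshev at least 3/4 of the points are good for each a; this gives
  about 2^d * 2^d incidences, i.e. nm/sqrt d.

  Rich subspaces: for an affine subspace S, the cube points in S and the normals of the
  hyperplanes containing S have pairwise orthogonal differences. Two subsets A, B of the cube
  with this property satisfy |A| |B| <= 2^d, by induction on d after splitting B by its last
  coordinate; and a hyperplane containing S is determined by its normal. Hence every product in
  rs is at most 2^d, i.e. O(nm 2^-d / sqrt d).
*)

theory Submission
  imports Defs
begin

definition cube :: "nat \<Rightarrow> (nat \<Rightarrow> real) set" where
  "cube d = {x. (\<forall>i<d. x i = 0 \<or> x i = 1) \<and> (\<forall>i\<ge>d. x i = 0)}"

lemma cube_0: "cube 0 = {\<lambda>_. 0}"
  unfolding cube_def by auto

lemma cube_subset_Rspace: "cube d \<subseteq> Rspace d"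
  unfolding cube_def Rspace_def by auto

lemma cube_coord_eq_0: "x \<in> cube d \<Longrightarrow> x d = 0"
  unfolding cube_def by auto

lemma fun_upd_eq_imp_eq: "x(d := c) = y(d := c') \<Longrightarrow> x d = y d \<Longrightarrow> x = y"
  by (metis fun_upd_triv fun_upd_upd)

lemma cube_Suc: "cube (Suc d) = cube d \<union> (\<lambda>x. x(d := 1)) ` cube d"
proof
  show "cube (Suc d) \<subseteq> cube d \<union> (\<lambda>x. x(d := 1)) ` cube d"
  proof
    fix x assume x: "x \<in> cube (Suc d)"
    then have "x(d := 0) \<in> cube d"
      unfolding cube_def by (auto simp: less_Suc_eq_le)
    moreover have "x = (x(d := 0))(d := x d)" and "x d = 0 \<or> x d = 1"
      using x unfolding cube_def by auto
    ultimately show "x \<in> cube d \<union> (\<lambda>x. x(d := 1)) ` cube d"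
      by (metis Un_iff fun_upd_triv image_eqI)
  qed
  show "cube d \<union> (\<lambda>x. x(d := 1)) ` cube d \<subseteq> cube (Suc d)"
    unfolding cube_def by (auto simp: less_Suc_eq)
qed

lemma inj_on_cube_upd: "inj_on (\<lambda>x. x(d := 1)) (cube d)"
  by (rule inj_onI) (metis cube_coord_eq_0 fun_upd_eq_imp_eq)

lemma cube_disjoint_upd: "cube d \<inter> (\<lambda>x. x(d := 1)) ` cube d = {}"
  using cube_coord_eq_0 by fastforce

lemma finite_cube: "finite (cube d)"
  by (induction d) (auto simp: cube_0 cube_Suc)

lemma sum_cube_Suc: "(\<Sum>x\<in>cube (Suc d). g x) = (\<Sum>x\<in>cube d. g x + g (x(d := 1)))"
  unfolding cube_Suc
  by (simp add: sum.union_disjoint finite_cube cube_disjoint_upd sum.reindex inj_on_cube_upd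
      sum.distrib)

lemma card_cube: "card (cube d) = 2 ^ d"
proof (induction d)
  case (Suc d)
  then show ?case
    using sum_cube_Suc[of "\<lambda>_. 1::nat" d] by simp
qed (simp add: cube_0)

definition centred_dot :: "nat \<Rightarrow> (nat \<Rightarrow> real) \<Rightarrow> (nat \<Rightarrow> real) \<Rightarrow> real" where
  "centred_dot d a x = (\<Sum>i<d. a i * (x i - 1/2))"

lemma centred_dot_eq: "centred_dot d a x = (\<Sum>i<d. a i * x i) - (\<Sum>i<d. a i) / 2"
  unfolding centred_dot_def by (simp add: right_diff_distrib sum_subtractf sum_divide_distrib)

lemma centred_dot_Suc:
  assumes "x \<in> cube d"
  shows "centred_dot (Suc d) a x = centred_dot d a x - a d / 2"
    and "centred_dot (Suc d) a (x(d := 1)) = centred_dot d a x + a d / 2"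
  using cube_coord_eq_0[OF assms] by (simp_all add: centred_dot_def)

text \<open>The coordinates x_i - 1/2 are independent with mean 0 and variance 1/4 over the cube.\<close>

lemma sum_cube_centred_dot_square:
  "(\<Sum>x\<in>cube d. (centred_dot d a x)\<^sup>2) = 2 ^ d * (\<Sum>i<d. (a i)\<^sup>2) / 4"
proof (induction d)
  case (Suc d)
  have "(\<Sum>x\<in>cube (Suc d). (centred_dot (Suc d) a x)\<^sup>2)
      = (\<Sum>x\<in>cube d. (centred_dot d a x - a d / 2)\<^sup>2 + (centred_dot d a x + a d / 2)\<^sup>2)"
    unfolding sum_cube_Suc by (rule sum.cong) (simp_all add: centred_dot_Suc)
  also have "\<dots> = (\<Sum>x\<in>cube d. 2 * (centred_dot d a x)\<^sup>2 + (a d)\<^sup>2 / 2)"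
    by (rule sum.cong) (simp_all add: power2_eq_square algebra_simps)
  also have "\<dots> = 2 ^ Suc d * (\<Sum>i<Suc d. (a i)\<^sup>2) / 4"
    by (simp add: sum.distrib sum_distrib_left[symmetric] Suc card_cube algebra_simps)
  finally show ?case .
qed (simp add: cube_0 centred_dot_def)

lemma card_cube_far_le:
  assumes a: "a \<in> cube d" and r: "0 \<le> r"
  shows "real (card {x \<in> cube d. r < \<bar>centred_dot d a x\<bar>}) * r\<^sup>2 \<le> 2 ^ d * real d / 4"
proof -
  let ?Far = "{x \<in> cube d. r < \<bar>centred_dot d a x\<bar>}"
  have "real (card ?Far) * r\<^sup>2 = (\<Sum>x\<in>?Far. r\<^sup>2)"
    by simp
  also have "\<dots> \<le> (\<Sum>x\<in>?Far. (centred_dot d a x)\<^sup>2)"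
  proof (rule sum_mono)
    fix x assume "x \<in> ?Far"
    then have "r \<le> \<bar>centred_dot d a x\<bar>" by simp
    then show "r\<^sup>2 \<le> (centred_dot d a x)\<^sup>2"
      using r by (metis power2_abs power_mono)
  qed
  also have "\<dots> \<le> (\<Sum>x\<in>cube d. (centred_dot d a x)\<^sup>2)"
    by (rule sum_mono2) (auto simp: finite_cube)
  also have "\<dots> \<le> 2 ^ d * real d / 4"
  proof -
    have "(\<Sum>i<d. (a i)\<^sup>2) \<le> (\<Sum>i<d. 1)"
      using a unfolding cube_def by (intro sum_mono) auto
    then show ?thesis by (simp add: sum_cube_centred_dot_square)
  qed
  finally show ?thesis .
qed

lemma card_cube_near_ge:
  assumes a: "a \<in> cube d" and r: "real d \<le> r\<^sup>2" "0 < r"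
  shows "3/4 * 2 ^ d \<le> real (card {x \<in> cube d. \<bar>centred_dot d a x\<bar> \<le> r})"
proof -
  let ?Near = "{x \<in> cube d. \<bar>centred_dot d a x\<bar> \<le> r}"
  let ?Far = "{x \<in> cube d. r < \<bar>centred_dot d a x\<bar>}"
  have "card (cube d) = card (?Near \<union> ?Far)"
    by (rule arg_cong[where f = card]) auto
  also have "\<dots> = card ?Near + card ?Far"
    by (rule card_Un_disjoint) (auto simp: finite_cube)
  finally have "real (card ?Near) + real (card ?Far) = 2 ^ d"
    by (simp add: card_cube flip: of_nat_add)
  moreover have "real (card ?Far) \<le> 2 ^ d / 4"
  proof -
    have "2 ^ d * real d / 4 \<le> 2 ^ d / 4 * r\<^sup>2"
      using r(1) by (simp add: field_simps)
    then have "real (card ?Far) * r\<^sup>2 \<le> 2 ^ d / 4 * r\<^sup>2"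
      using card_cube_far_le[OF a less_imp_le[OF r(2)]] by linarith
    then show ?thesis
      by (rule mult_right_le_imp_le) (use r(2) in simp)
  qed
  ultimately show ?thesis by linarith
qed

definition orth_diffs :: "nat \<Rightarrow> (nat \<Rightarrow> real) set \<Rightarrow> (nat \<Rightarrow> real) set \<Rightarrow> bool" where
  "orth_diffs d A B \<longleftrightarrow>
    (\<forall>x\<in>A. \<forall>x'\<in>A. \<forall>a\<in>B. \<forall>a'\<in>B. (\<Sum>i<d. (x i - x' i) * (a i - a' i)) = 0)"

lemma orth_diffs_commute:
  assumes "orth_diffs d A B"
  shows "orth_diffs d B A"
  unfolding orth_diffs_def
proof (intro ballI)
  fix x x' a a' assume "x \<in> B" "x' \<in> B" "a \<in> A" "a' \<in> A"
  then have "(\<Sum>i<d. (a i - a' i) * (x i - x' i)) = 0"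
    using assms unfolding orth_diffs_def by blast
  then show "(\<Sum>i<d. (x i - x' i) * (a i - a' i)) = 0"
    by (simp add: mult.commute)
qed

lemma upd_last_mem_cube: "x \<in> cube (Suc d) \<Longrightarrow> x(d := 0) \<in> cube d"
  unfolding cube_def by (auto simp: less_Suc_eq_le)

lemma orth_diffs_Suc_slice:
  assumes "orth_diffs (Suc d) A B"
  shows "orth_diffs d ((\<lambda>x. x(d := 0)) ` A) ((\<lambda>a. a(d := 0)) ` {a \<in> B. a d = c})"
  unfolding orth_diffs_def
proof (intro ballI)
  fix y y' b b'
  assume "y \<in> (\<lambda>x. x(d := 0)) ` A" "y' \<in> (\<lambda>x. x(d := 0)) ` A"
    and "b \<in> (\<lambda>a. a(d := 0)) ` {a \<in> B. a d = c}" "b' \<in> (\<lambda>a. a(d := 0)) ` {a \<in> B. a d = c}"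
  then obtain x x' a a' where "x \<in> A" "x' \<in> A" "a \<in> B" "a' \<in> B" "a d = a' d"
    and upd: "y = x(d := 0)" "y' = x'(d := 0)" "b = a(d := 0)" "b' = a'(d := 0)"
    by auto
  then have "(\<Sum>i<Suc d. (x i - x' i) * (a i - a' i)) = 0"
    using assms unfolding orth_diffs_def by blast
  then show "(\<Sum>i<d. (y i - y' i) * (b i - b' i)) = 0"
    using \<open>a d = a' d\<close> unfolding upd by simp
qed

text \<open>Two distinct points of A agreeing off the last coordinate force every difference in B
  to vanish in the last coordinate.\<close>

lemma inj_on_upd_last_of_orth_diffs:
  assumes orth: "orth_diffs (Suc d) A B" and not_inj: "\<not> inj_on (\<lambda>x. x(d := 0)) A"
  shows "inj_on (\<lambda>a. a(d := 0)) B"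
proof (rule inj_onI, rule ccontr)
  obtain x x' where x: "x \<in> A" "x' \<in> A" "x \<noteq> x'" and eq: "x(d := 0) = x'(d := 0)"
    using not_inj unfolding inj_on_def by blast
  fix a a' assume a: "a \<in> B" "a' \<in> B" "a(d := 0) = a'(d := 0)" "a \<noteq> a'"
  have "x d \<noteq> x' d"
    using fun_upd_eq_imp_eq[OF eq] x(3) by blast
  have "a d \<noteq> a' d"
    using fun_upd_eq_imp_eq[OF a(3)] a(4) by blast
  have "(\<Sum>i<d. (x i - x' i) * (a i - a' i)) = 0"
  proof (rule sum.neutral, intro ballI)
    fix i assume "i \<in> {..<d}"
    then have "x i = x' i"
      using fun_cong[OF eq, of i] by (auto split: if_splits)
    then show "(x i - x' i) * (a i - a' i) = 0"
      by simp
  qed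
  moreover have "(\<Sum>i<Suc d. (x i - x' i) * (a i - a' i)) = 0"
    using orth x a unfolding orth_diffs_def by blast
  ultimately have "(x d - x' d) * (a d - a' d) = 0"
    by simp
  with \<open>x d \<noteq> x' d\<close> \<open>a d \<noteq> a' d\<close> show False
    by simp
qed

lemma card_mult_card_le_Suc_of_inj_on:
  assumes IH: "\<And>A B. A \<subseteq> cube d \<Longrightarrow> B \<subseteq> cube d \<Longrightarrow> orth_diffs d A B \<Longrightarrow>
      card A * card B \<le> 2 ^ d"
    and A: "A \<subseteq> cube (Suc d)" and B: "B \<subseteq> cube (Suc d)"
    and orth: "orth_diffs (Suc d) A B" and inj: "inj_on (\<lambda>x. x(d := 0)) A"
  shows "card A * card B \<le> 2 ^ Suc d"
proof -
  let ?upd = "\<lambda>x. x(d := 0)"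
  define slice where "slice c = {a \<in> B. a d = c}" for c :: real
  have slice_bound: "card A * card (slice c) \<le> 2 ^ d" for c
  proof -
    have "inj_on ?upd (slice c)"
      unfolding slice_def by (rule inj_onI) (auto intro: fun_upd_eq_imp_eq)
    moreover have "card (?upd ` A) * card (?upd ` slice c) \<le> 2 ^ d"
    proof (rule IH)
      show "?upd ` A \<subseteq> cube d" "?upd ` slice c \<subseteq> cube d"
        using A B upd_last_mem_cube unfolding slice_def by auto
      show "orth_diffs d (?upd ` A) (?upd ` slice c)"
        unfolding slice_def by (rule orth_diffs_Suc_slice[OF orth])
    qed
    ultimately show ?thesis
      using inj by (simp add: card_image)
  qed
  have "finite B"
    using B finite_cube finite_subset by blast
  have "B = slice 0 \<union> slice 1"
    using B unfolding slice_def cube_def by auto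
  then have "card B = card (slice 0 \<union> slice 1)"
    by simp
  also have "\<dots> = card (slice 0) + card (slice 1)"
    by (rule card_Un_disjoint) (use \<open>finite B\<close> in \<open>auto simp: slice_def\<close>)
  finally show ?thesis
    using slice_bound[of 0] slice_bound[of 1] by (simp add: distrib_left)
qed

text \<open>The cube analogue of dim U + dim U^perp = d.\<close>

lemma card_mult_card_le_of_orth_diffs:
  "A \<subseteq> cube d \<Longrightarrow> B \<subseteq> cube d \<Longrightarrow> orth_diffs d A B \<Longrightarrow> card A * card B \<le> 2 ^ d"
proof (induction d arbitrary: A B)
  case 0
  then have "card A \<le> 1" "card B \<le> 1"
    by (auto simp: cube_0 subset_singleton_iff)
  then show ?case
    using mult_le_mono[of "card A" 1 "card B" 1] by simp
next
  case (Suc d)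
  show ?case
  proof (cases "inj_on (\<lambda>x. x(d := 0)) A")
    case True
    show ?thesis
      by (rule card_mult_card_le_Suc_of_inj_on[OF Suc.IH Suc.prems True]) auto
  next
    case False
    have "card B * card A \<le> 2 ^ Suc d"
      using Suc.prems orth_diffs_commute inj_on_upd_last_of_orth_diffs[OF Suc.prems(3) False]
      by (intro card_mult_card_le_Suc_of_inj_on[OF Suc.IH]) simp_all
    then show ?thesis
      by (simp add: mult.commute)
  qed
qed

lemma sum_mult_indicator_coord:
  fixes c :: "nat \<Rightarrow> real"
  assumes "j < d"
  shows "(\<Sum>i<d. c i * (if i = j then t else 0)) = c j * t"
  using assms by (simp add: if_distrib[of "(*) _"] cong: if_cong)

text \<open>The points p j below, one for each coordinate j, all lie on the first hyperplane; they
  span it affinely and pin down the second equation.\<close>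

lemma hyperplane_subset_imp_proportional:
  fixes a a' :: "nat \<Rightarrow> real"
  assumes i0: "i0 < d" "a i0 \<noteq> 0"
    and sub: "{x \<in> Rspace d. (\<Sum>i<d. a i * x i) = b} \<subseteq> {x \<in> Rspace d. (\<Sum>i<d. a' i * x i) = b'}"
  shows "\<forall>j<d. a' j = a' i0 / a i0 * a j" and "b' = a' i0 / a i0 * b"
proof -
  define p where "p j = (\<lambda>i. (if i = i0 then (b - a j) / a i0 else 0) + (if i = j then 1 else 0))"
    for j
  have dot_p: "(\<Sum>i<d. c i * p j i) = c i0 * ((b - a j) / a i0) + c j" if "j < d" for c j
  proof -
    have "(\<Sum>i<d. c i * p j i) = (\<Sum>i<d. c i * (if i = i0 then (b - a j) / a i0 else 0))
        + (\<Sum>i<d. c i * (if i = j then 1 else 0))"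
      unfolding p_def distrib_left by (rule sum.distrib)
    then show ?thesis
      using i0(1) that by (simp only: sum_mult_indicator_coord mult_1_right)
  qed
  have "p j \<in> {x \<in> Rspace d. (\<Sum>i<d. a i * x i) = b}" if "j < d" for j
  proof -
    have "p j \<in> Rspace d"
      using i0 that by (auto simp: Rspace_def p_def)
    then show ?thesis
      using dot_p[OF that, of a] i0(2) by simp
  qed
  then have "p j \<in> {x \<in> Rspace d. (\<Sum>i<d. a' i * x i) = b'}" if "j < d" for j
    using sub that by blast
  then have on_second: "a' i0 * ((b - a j) / a i0) + a' j = b'" if "j < d" for j
    using dot_p[OF that, of a'] that by simp
  from on_second[OF i0(1)] i0(2) show b': "b' = a' i0 / a i0 * b"
    by (simp add: field_simps)
  show "\<forall>j<d. a' j = a' i0 / a i0 * a j"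
  proof (intro allI impI)
    fix j assume "j < d"
    from on_second[OF this] b' i0(2) show "a' j = a' i0 / a i0 * a j"
      by (simp add: field_simps)
  qed
qed

lemma cube_nonzero_coord:
  assumes "a \<in> cube d - {\<lambda>_. 0}"
  shows "\<exists>i<d. a i = 1"
proof (rule ccontr)
  assume "\<not> (\<exists>i<d. a i = 1)"
  then have "a i = 0" for i
    using assms unfolding cube_def by (cases "i < d") auto
  then have "a = (\<lambda>_. 0)"
    by (simp add: fun_eq_iff)
  with assms show False
    by simp
qed

definition cube_hyperplane :: "nat \<Rightarrow> (nat \<Rightarrow> real) \<Rightarrow> int \<Rightarrow> (nat \<Rightarrow> real) set" where
  "cube_hyperplane d a s = {x \<in> Rspace d. 2 * centred_dot d a x = of_int s}"

lemma cube_hyperplane_eq: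
  "cube_hyperplane d a s = {x \<in> Rspace d. (\<Sum>i<d. a i * x i) = (of_int s + (\<Sum>i<d. a i)) / 2}"
  unfolding cube_hyperplane_def centred_dot_eq by (auto simp: field_simps)

lemma hyperplane_cube_hyperplane:
  assumes "a \<in> cube d - {\<lambda>_. 0}"
  shows "hyperplane d (cube_hyperplane d a s)"
  unfolding hyperplane_def cube_hyperplane_eq using cube_nonzero_coord[OF assms]
  by (intro exI[of _ a] exI[of _ "(of_int s + (\<Sum>i<d. a i)) / 2"]) auto

lemma cube_hyperplane_inj:
  assumes a: "a \<in> cube d - {\<lambda>_. 0}" and a': "a' \<in> cube d - {\<lambda>_. 0}"
    and eq: "cube_hyperplane d a s = cube_hyperplane d a' s'"
  shows "a = a' \<and> s = s'"
proof -
  obtain i0 where i0: "i0 < d" "a i0 = 1"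
    using cube_nonzero_coord[OF a] by blast
  have "{x \<in> Rspace d. (\<Sum>i<d. a i * x i) = (of_int s + (\<Sum>i<d. a i)) / 2}
      \<subseteq> {x \<in> Rspace d. (\<Sum>i<d. a' i * x i) = (of_int s' + (\<Sum>i<d. a' i)) / 2}"
    using eq unfolding cube_hyperplane_eq by simp
  from hyperplane_subset_imp_proportional[OF i0(1) _ this] i0(2)
  have lin: "\<forall>j<d. a' j = a' i0 * a j"
    and off: "(of_int s' + (\<Sum>i<d. a' i)) / 2 = a' i0 * ((of_int s + (\<Sum>i<d. a i)) / 2)"
    by simp_all
  have "a' i0 = 1"
  proof (rule ccontr)
    assume "a' i0 \<noteq> 1"
    then have "a' i0 = 0"
      using a' i0(1) unfolding cube_def by auto
    then have "a' i = 0" for i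
      using lin a' unfolding cube_def by (cases "i < d") auto
    then have "a' = (\<lambda>_. 0)"
      by (simp add: fun_eq_iff)
    with a' show False
      by simp
  qed
  then have "a i = a' i" for i
    using lin a a' unfolding cube_def by (cases "i < d") auto
  then have "a = a'"
    by (simp add: fun_eq_iff)
  with off \<open>a' i0 = 1\<close> show ?thesis
    by simp
qed

lemma card_cube_minus_zero: "card (cube d - {\<lambda>_. 0}) = 2 ^ d - 1"
proof -
  have "(\<lambda>_. 0) \<in> cube d"
    unfolding cube_def by simp
  then show ?thesis
    by (simp add: card_Diff_singleton card_cube)
qed

definition cube_hyperplanes :: "nat \<Rightarrow> nat \<Rightarrow> (nat \<Rightarrow> real) set set" where
  "cube_hyperplanes d r =
    (\<lambda>(a, s). cube_hyperplane d a s) ` ((cube d - {\<lambda>_. 0}) \<times> {-2 * int r..2 * int r})"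

lemma finite_cube_hyperplanes: "finite (cube_hyperplanes d r)"
  unfolding cube_hyperplanes_def by (simp add: finite_cube)

lemma card_cube_hyperplanes: "card (cube_hyperplanes d r) = (2 ^ d - 1) * (4 * r + 1)"
proof -
  have "inj_on (\<lambda>(a, s). cube_hyperplane d a s) ((cube d - {\<lambda>_. 0}) \<times> {-2 * int r..2 * int r})"
    by (rule inj_onI) (use cube_hyperplane_inj in auto)
  moreover have "card {-2 * int r..2 * int r} = 4 * r + 1"
    by simp
  ultimately show ?thesis
    unfolding cube_hyperplanes_def by (simp add: card_image card_cartesian_product card_cube_minus_zero)
qed

lemma two_centred_dot_Ints:
  assumes "a \<in> cube d" "x \<in> cube d"
  shows "2 * centred_dot d a x \<in> \<int>"
proof -
  have "2 * centred_dot d a x = (\<Sum>i<d. 2 * a i * x i - a i)"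
    unfolding centred_dot_def by (simp add: sum_distrib_left algebra_simps)
  also have "\<dots> \<in> \<int>"
  proof (rule Ints_sum)
    fix i assume "i \<in> {..<d}"
    then have "a i = 0 \<or> a i = 1" "x i = 0 \<or> x i = 1"
      using assms unfolding cube_def by auto
    then show "2 * a i * x i - a i \<in> \<int>"
      by auto
  qed
  finally show ?thesis .
qed

lemma incidences_cube_hyperplanes_ge:
  assumes r: "real d \<le> (real r)\<^sup>2" "0 < r"
  shows "(2 ^ d - 1) * (3/4 * 2 ^ d) \<le> real (incidences (cube d) (cube_hyperplanes d r))"
proof -
  let ?D = "cube d - {\<lambda>_. 0}"
  define near where "near a = {x \<in> cube d. \<bar>centred_dot d a x\<bar> \<le> real r}" for a
  define Inc where "Inc = {(p, h). p \<in> cube d \<and> h \<in> cube_hyperplanes d r \<and> p \<in> h}"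
  define incidence where
    "incidence = (\<lambda>(a, x). (x, cube_hyperplane d a \<lfloor>2 * centred_dot d a x\<rfloor>))"
  have "incidence ` Sigma ?D near \<subseteq> Inc"
  proof
    fix y assume "y \<in> incidence ` Sigma ?D near"
    then obtain a x where a: "a \<in> ?D" and x: "x \<in> near a" and y: "y = incidence (a, x)"
      by blast
    define k where "k = \<lfloor>2 * centred_dot d a x\<rfloor>"
    have "x \<in> cube d" and "\<bar>centred_dot d a x\<bar> \<le> real r"
      using x unfolding near_def by auto
    moreover have k: "of_int k = 2 * centred_dot d a x"
      unfolding k_def using two_centred_dot_Ints a \<open>x \<in> cube d\<close> by (simp add: Ints_def)
    ultimately have "k \<in> {-2 * int r..2 * int r}" and "x \<in> cube_hyperplane d a k"
      using cube_subset_Rspace by (auto simp: cube_hyperplane_def)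
    with a \<open>x \<in> cube d\<close> show "y \<in> Inc"
      unfolding y incidence_def Inc_def cube_hyperplanes_def k_def by force
  qed
  moreover have "inj_on incidence (Sigma ?D near)"
  proof (rule inj_onI)
    fix u v assume "u \<in> Sigma ?D near" "v \<in> Sigma ?D near" "incidence u = incidence v"
    then show "u = v"
      using cube_hyperplane_inj[of "fst u" d "fst v"] unfolding incidence_def by auto
  qed
  moreover have "finite Inc"
    using finite_cube finite_cube_hyperplanes
    by (auto intro: finite_subset[of _ "cube d \<times> cube_hyperplanes d r"] simp: Inc_def)
  ultimately have "card (Sigma ?D near) \<le> incidences (cube d) (cube_hyperplanes d r)"
    unfolding incidences_def Inc_def[symmetric] by (simp add: card_inj_on_le)
  have "(2 ^ d - 1) * (3/4 * 2 ^ d) = (\<Sum>a\<in>?D. 3/4 * (2 ^ d :: real))"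
    by (simp add: card_cube_minus_zero of_nat_diff)
  also have "\<dots> \<le> (\<Sum>a\<in>?D. real (card (near a)))"
    unfolding near_def using card_cube_near_ge r by (intro sum_mono) auto
  also have "\<dots> = real (card (Sigma ?D near))"
    by (subst card_SigmaI) (auto simp: near_def finite_cube)
  also have "\<dots> \<le> real (incidences (cube d) (cube_hyperplanes d r))"
    using \<open>card (Sigma ?D near) \<le> _\<close> by simp
  finally show ?thesis .
qed

lemma rs_le:
  assumes bound: "\<And>S. affine_subspace d S \<Longrightarrow> card {p \<in> P. p \<in> S} * card {h \<in> H. S \<subseteq> h} \<le> k"
  shows "rs d P H \<le> k"
proof -
  let ?X = "{card {p \<in> P. p \<in> S} * card {h \<in> H. S \<subseteq> h} | S. affine_subspace d S}"
  have "affine_subspace d (Rspace d)"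
    unfolding affine_subspace_def Rspace_def by (auto intro!: exI[of _ "\<lambda>_. 0"])
  then have "?X \<noteq> {}"
    by blast
  moreover have "?X \<subseteq> {..k}"
    using bound by auto
  then have "finite ?X"
    using finite_subset by blast
  moreover have "\<forall>y\<in>?X. y \<le> k"
    using bound by auto
  ultimately show ?thesis
    unfolding rs_def by (simp add: Max.boundedI)
qed

lemma sum_diff_mult_diff_eq_centred_dot:
  "(\<Sum>i<d. (x i - x' i) * (a i - a' i))
    = (centred_dot d a x - centred_dot d a x') - (centred_dot d a' x - centred_dot d a' x')"
  unfolding centred_dot_def by (simp add: sum_subtractf[symmetric] algebra_simps)

lemma card_cube_in_mult_card_hyperplanes_through_le:
  assumes S: "affine_subspace d S"
  shows "card {p \<in> cube d. p \<in> S} * card {h \<in> cube_hyperplanes d r. S \<subseteq> h} \<le> 2 ^ d"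
proof -
  obtain x0 where x0: "x0 \<in> S"
    using S unfolding affine_subspace_def by blast
  let ?A = "{p \<in> cube d. p \<in> S}"
  define J where "J = {(a, s) \<in> (cube d - {\<lambda>_. 0}) \<times> {-2 * int r..2 * int r}.
    S \<subseteq> cube_hyperplane d a s}"
  have "finite J"
    unfolding J_def by (rule finite_subset[of _ "cube d \<times> {-2 * int r..2 * int r}"])
      (auto simp: finite_cube)
  have "inj_on fst J"
  proof (rule inj_onI)
    fix u v assume "u \<in> J" "v \<in> J" "fst u = fst v"
    then have "x0 \<in> cube_hyperplane d (fst u) (snd u)" "x0 \<in> cube_hyperplane d (fst u) (snd v)"
      using x0 unfolding J_def by auto
    then have "snd u = snd v"
      by (simp add: cube_hyperplane_def)
    with \<open>fst u = fst v\<close> show "u = v"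
      by (simp add: prod_eq_iff)
  qed
  have "{h \<in> cube_hyperplanes d r. S \<subseteq> h} = (\<lambda>(a, s). cube_hyperplane d a s) ` J"
    unfolding cube_hyperplanes_def J_def by auto
  then have "card {h \<in> cube_hyperplanes d r. S \<subseteq> h} \<le> card (fst ` J)"
    using card_image_le[OF \<open>finite J\<close>] card_image[OF \<open>inj_on fst J\<close>] by simp
  moreover have "orth_diffs d ?A (fst ` J)"
    unfolding orth_diffs_def
  proof (intro ballI)
    fix x x' a a' assume x: "x \<in> ?A" "x' \<in> ?A" and a: "a \<in> fst ` J" "a' \<in> fst ` J"
    have "centred_dot d b x = centred_dot d b x'" if b: "b \<in> fst ` J" for b
    proof -
      obtain s where "(b, s) \<in> J"
        using b by force
      then have "S \<subseteq> cube_hyperplane d b s"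
        unfolding J_def by simp
      then have "x \<in> cube_hyperplane d b s" "x' \<in> cube_hyperplane d b s"
        using x by auto
      then show ?thesis
        by (simp add: cube_hyperplane_def)
    qed
    with a show "(\<Sum>i<d. (x i - x' i) * (a i - a' i)) = 0"
      by (simp add: sum_diff_mult_diff_eq_centred_dot)
  qed
  then have "card ?A * card (fst ` J) \<le> 2 ^ d"
    by (rule card_mult_card_le_of_orth_diffs[rotated 2]) (auto simp: J_def)
  ultimately show ?thesis
    using mult_le_mono2[of "card {h \<in> cube_hyperplanes d r. S \<subseteq> h}" "card (fst ` J)" "card ?A"]
    by linarith
qed

lemma ceiling_sqrt_bounds:
  assumes "2 \<le> d"
  defines "r \<equiv> nat \<lceil>sqrt (real d)\<rceil>"
  shows "real d \<le> (real r)\<^sup>2" and "0 < r"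
    and "4 \<le> (4 * real r + 1) / sqrt (real d)" and "(4 * real r + 1) / sqrt (real d) \<le> 8"
proof -
  have "sqrt (25/16) \<le> sqrt (real d)"
    using assms(1) by (subst real_sqrt_le_iff) simp
  moreover have "sqrt (25/16 :: real) = 5/4"
    by (simp add: real_sqrt_divide)
  moreover have "real r = of_int \<lceil>sqrt (real d)\<rceil>"
    unfolding r_def by simp
  then have "sqrt (real d) \<le> real r" "real r \<le> sqrt (real d) + 1"
    using le_of_int_ceiling of_int_ceiling_le_add_one by simp_all
  ultimately have sqrt_d: "5/4 \<le> sqrt (real d)" and r: "sqrt (real d) \<le> real r"
    and "4 * real r + 1 \<le> 8 * sqrt (real d)"
    by linarith+
  moreover have "0 < sqrt (real d)"
    using sqrt_d by linarith
  ultimately show "4 \<le> (4 * real r + 1) / sqrt (real d)" "(4 * real r + 1) / sqrt (real d) \<le> 8"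
    by (simp_all add: pos_le_divide_eq pos_divide_le_eq)
  have "(sqrt (real d))\<^sup>2 \<le> (real r)\<^sup>2"
    using r by (rule power_mono) simp
  then show "real d \<le> (real r)\<^sup>2"
    by simp
  show "0 < r"
    using sqrt_d r by linarith
qed

lemma cube_configuration:
  assumes "2 \<le> d"
  defines "r \<equiv> nat \<lceil>sqrt (real d)\<rceil>"
  defines "P \<equiv> cube d" and "H \<equiv> cube_hyperplanes d r"
  shows "3/32 * real (card P) * real (card H) / sqrt (real d) \<le> real (incidences P H)"
    and "real (rs d P H) \<le> 1 * real (card H) * real (card P) * (1/2) ^ d / sqrt (real d)"
proof -
  note r = ceiling_sqrt_bounds[OF assms(1), folded r_def]
  define N :: real where "N = 2 ^ d - 1"
  have "4 \<le> (2::real) ^ d"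
    using power_increasing[OF assms(1), of "2::real"] by simp
  then have N: "0 \<le> N" "2 ^ d \<le> 4 * N"
    unfolding N_def by simp_all
  have "1 \<le> (2::nat) ^ d"
    by simp
  then have card: "real (card P) = 2 ^ d" "real (card H) = N * (4 * real r + 1)"
    unfolding P_def H_def N_def card_cube card_cube_hyperplanes of_nat_mult
    by (simp_all add: of_nat_diff)
  have "3/32 * real (card P) * real (card H) / sqrt (real d)
      = 3/32 * 2 ^ d * N * ((4 * real r + 1) / sqrt (real d))"
    unfolding card by simp
  also have "\<dots> \<le> 3/32 * 2 ^ d * N * 8"
    using r N by (intro mult_left_mono) simp_all
  also have "\<dots> = (2 ^ d - 1) * (3/4 * 2 ^ d)"
    unfolding N_def by simp
  also have "\<dots> \<le> real (incidences P H)"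
    unfolding P_def H_def using r by (intro incidences_cube_hyperplanes_ge) simp_all
  finally show "3/32 * real (card P) * real (card H) / sqrt (real d) \<le> real (incidences P H)" .
  have "real (rs d P H) \<le> 2 ^ d"
    unfolding P_def H_def using card_cube_in_mult_card_hyperplanes_through_le
    by (simp add: rs_le)
  also have "\<dots> \<le> N * 4"
    using N by simp
  also have "\<dots> \<le> N * ((4 * real r + 1) / sqrt (real d))"
    using r N by (intro mult_left_mono) simp_all
  also have "\<dots> = 1 * real (card H) * real (card P) * (1/2) ^ d / sqrt (real d)"
    unfolding card by (simp add: power_one_over)
  finally show "real (rs d P H) \<le> 1 * real (card H) * real (card P) * (1/2) ^ d / sqrt (real d)" .
qed

theorem theorem1p6:
  shows "\<exists>c C :: real. c > 0 \<and> C > 0 \<and>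
    (\<forall>d::nat. d \<ge> 2 \<longrightarrow>
      (\<exists>P H. finite P \<and> finite H \<and> P \<noteq> {} \<and> H \<noteq> {} \<and>
         P \<subseteq> Rspace d \<and> (\<forall>h\<in>H. hyperplane d h) \<and>
         real (incidences P H) \<ge> c * real (card P) * real (card H) / sqrt (real d) \<and>
         real (rs d P H) \<le> C * real (card H) * real (card P) * (1/2) ^ d / sqrt (real d)))"
proof (rule exI[of _ "3/32"], rule exI[of _ 1], intro conjI allI impI)
  fix d :: nat assume d: "2 \<le> d"
  let ?H = "cube_hyperplanes d (nat \<lceil>sqrt (real d)\<rceil>)"
  have "1 < (2::nat) ^ d"
    using d by (intro one_less_power) simp_all
  then have "card (cube d) \<noteq> 0" "card ?H \<noteq> 0"
    unfolding card_cube card_cube_hyperplanes mult_is_0 by simp_all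
  then show "\<exists>P H. finite P \<and> finite H \<and> P \<noteq> {} \<and> H \<noteq> {} \<and>
      P \<subseteq> Rspace d \<and> (\<forall>h\<in>H. hyperplane d h) \<and>
      real (incidences P H) \<ge> 3/32 * real (card P) * real (card H) / sqrt (real d) \<and>
      real (rs d P H) \<le> 1 * real (card H) * real (card P) * (1/2) ^ d / sqrt (real d)"
    using cube_configuration[OF d] finite_cube finite_cube_hyperplanes cube_subset_Rspace
      hyperplane_cube_hyperplane
    by (intro exI[of _ "cube d"] exI[of _ ?H] conjI) (auto simp: cube_hyperplanes_def)
qed (simp_all)

end
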